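(* Let $S$ be a virtual flat biquandle and $C_n(S)$ the free abelian group on $n$-tuples of elements of $S$. Define $d_n:C_n(S)\to C_{n-1}(S)$ by $$d_n(a_1,\dots,a_n)=\sum_{i=1}^{n-1}(-1)^i\big((a_1,\dots,\widehat{a_i},\dots,a_n)-(a_1,\dots,\widehat{a_i},\dots,a_{n-1},a_n\circ a_i)\big),$$ where $\widehat{a_i}$ denotes omission of $a_i$. Then $d_{n-1}\circ d_n=0$ for all $n$.
   Context: A virtual flat biquandle is a set $S$ with two binary operations $a\ast b$, $a\circ b$; writing $S_b(a)=a\ast b$, $T_b(a)=a\circ b$, for all $a,b\in S$: (1) $S_aS_b=S_bS_a$, $T_aT_b=T_bT_a$, $S_aT_b=T_bS_a$; (2) $S_a=S_{T_b(a)}=S_{S_b(a)}$, $T_a=T_{S_b(a)}=T_{T_b(a)}$; (3) $T_aS_a=S_aT_a=\mathrm{id}$. *)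

theory Defs
  imports "HOL-Library.Poly_Mapping"
begin

text \<open>A virtual flat biquandle on the carrier type 'a, with S_b(a) = star a b and
  T_b(a) = circ a b.  Axioms (1)-(3), written pointwise.\<close>
definition virtual_flat_biquandle :: "('a \<Rightarrow> 'a \<Rightarrow> 'a) \<Rightarrow> ('a \<Rightarrow> 'a \<Rightarrow> 'a) \<Rightarrow> bool" where
  "virtual_flat_biquandle star circ \<longleftrightarrow>
     (\<forall>a b x. star (star x b) a = star (star x a) b) \<and>
     (\<forall>a b x. circ (circ x b) a = circ (circ x a) b) \<and>
     (\<forall>a b x. star (circ x b) a = circ (star x a) b) \<and>
     (\<forall>a b x. star x a = star x (circ a b) \<and> star x a = star x (star a b)) \<and>
     (\<forall>a b x. circ x a = circ x (star a b) \<and> circ x a = circ x (circ a b)) \<and>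
     (\<forall>a x. circ (star x a) a = x \<and> star (circ x a) a = x)"

definition chains :: "nat \<Rightarrow> ('a list \<Rightarrow>\<^sub>0 int) set" where
  "chains n = {c. Poly_Mapping.keys c \<subseteq> {as. length as = n}}"

text \<open>The boundary on a generator (a_1,...,a_n), n = length as; a_i = as ! (i-1).\<close>
definition vfb_bd_gen :: "('a \<Rightarrow> 'a \<Rightarrow> 'a) \<Rightarrow> 'a list \<Rightarrow> ('a list \<Rightarrow>\<^sub>0 int)" where
  "vfb_bd_gen circ as =
     (\<Sum>i\<in>{1..length as - 1}.
        frag_cmul ((-1) ^ i)
          (frag_of (take (i - 1) as @ drop i as)
           - frag_of (take (i - 1) as @ drop i (butlast as) @ [circ (last as) (as ! (i - 1))])))"

definition vfb_bd :: "('a \<Rightarrow> 'a \<Rightarrow> 'a) \<Rightarrow> ('a list \<Rightarrow>\<^sub>0 int) \<Rightarrow> ('a list \<Rightarrow>\<^sub>0 int)" where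
  "vfb_bd circ = frag_extend (vfb_bd_gen circ)"

end

theory Submission
  imports Defs
begin

text \<open>Writing \<open>\<partial>\<^sub>k\<close> for the map sending a tuple to the difference of its two \<open>k\<close>-th faces
  (omit the entry, or omit it and let it act on the last entry via \<open>\<circ>\<close>), the boundary is
  \<open>d = \<Sigma>\<^sub>k (-1)\<^sup>k\<^sup>+\<^sup>1 \<partial>\<^sub>k\<close>.  Because right translations by \<open>\<circ>\<close> commute, the \<open>\<partial>\<^sub>k\<close> satisfy the
  semi-simplicial identities \<open>\<partial>\<^sub>j \<partial>\<^sub>i = \<partial>\<^sub>i \<partial>\<^sub>j\<^sub>+\<^sub>1\<close> for \<open>i \<le> j\<close>, and then the terms of \<open>d d\<close>
  cancel in pairs exactly as for the boundary of a simplicial complex.\<close>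

text \<open>Positions are 0-based: index \<open>k\<close> omits the paper's \<open>a\<^sub>k\<^sub>+\<^sub>1\<close>.\<close>

definition delete_nth :: "nat \<Rightarrow> 'a list \<Rightarrow> 'a list" where
  "delete_nth k xs = take k xs @ drop (Suc k) xs"

definition delete_nth_act :: "('a \<Rightarrow> 'a \<Rightarrow> 'a) \<Rightarrow> nat \<Rightarrow> 'a list \<Rightarrow> 'a list" where
  "delete_nth_act circ k xs = take k xs @ drop (Suc k) (butlast xs) @ [circ (last xs) (xs ! k)]"

definition face :: "('a \<Rightarrow> 'a \<Rightarrow> 'a) \<Rightarrow> nat \<Rightarrow> ('a list \<Rightarrow>\<^sub>0 int) \<Rightarrow> ('a list \<Rightarrow>\<^sub>0 int)" where
  "face circ k = frag_extend (\<lambda>xs. frag_of (delete_nth k xs) - frag_of (delete_nth_act circ k xs))"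

lemma face_diff: "face circ k (a - b) = face circ k a - face circ k b"
  by (simp add: face_def frag_extend_diff)

lemma list_split_at_two_indices:
  assumes "i \<le> j" "Suc (Suc j) < length xs"
  obtains ys a zs b ws x where "xs = ys @ a # zs @ b # ws @ [x]" "length ys = i" "length zs = j - i"
proof -
  define rest where "rest = drop (Suc i) xs"
  define tail where "tail = drop (Suc (j - i)) rest"
  have i: "i < length xs" and ji: "j - i < length rest"
    using assms by (auto simp: rest_def)
  have "xs = take i xs @ xs ! i # rest"
    unfolding rest_def using id_take_nth_drop[OF i] .
  also have "rest = take (j - i) rest @ rest ! (j - i) # tail"
    unfolding tail_def using id_take_nth_drop[OF ji] .
  also have "tail = butlast tail @ [last tail]"
    using assms by (intro append_butlast_last_id[symmetric]) (simp add: tail_def rest_def)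
  finally have "xs = take i xs @ xs ! i # take (j - i) rest @ rest ! (j - i) # butlast tail @ [last tail]" .
  moreover have "length (take i xs) = i" "length (take (j - i) rest) = j - i"
    using i ji by simp_all
  ultimately show thesis using that by blast
qed

lemma delete_nth_face_identities:
  assumes comm: "\<And>x a b. circ (circ x a) b = circ (circ x b) a"
    and "i \<le> j" "Suc (Suc j) < length xs"
  shows "delete_nth j (delete_nth i xs) = delete_nth i (delete_nth (Suc j) xs)"
    and "delete_nth_act circ j (delete_nth i xs) = delete_nth i (delete_nth_act circ (Suc j) xs)"
    and "delete_nth j (delete_nth_act circ i xs) = delete_nth_act circ i (delete_nth (Suc j) xs)"
    and "delete_nth_act circ j (delete_nth_act circ i xs)
      = delete_nth_act circ i (delete_nth_act circ (Suc j) xs)"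
proof -
  obtain ys a zs b ws x where xs: "xs = ys @ a # zs @ b # ws @ [x]"
      and len: "length ys = i" "length zs = j - i"
    using list_split_at_two_indices[OF assms(2,3)] .
  have j: "j = i + length zs"
    using len assms(2) by simp
  show "delete_nth j (delete_nth i xs) = delete_nth i (delete_nth (Suc j) xs)"
    and "delete_nth_act circ j (delete_nth i xs) = delete_nth i (delete_nth_act circ (Suc j) xs)"
    and "delete_nth j (delete_nth_act circ i xs) = delete_nth_act circ i (delete_nth (Suc j) xs)"
    and "delete_nth_act circ j (delete_nth_act circ i xs)
      = delete_nth_act circ i (delete_nth_act circ (Suc j) xs)"
    unfolding xs j delete_nth_def delete_nth_act_def
    using len by (simp_all add: nth_append butlast_append comm)
qed

lemma face_face_frag_of:
  assumes comm: "\<And>x a b. circ (circ x a) b = circ (circ x b) a"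
    and "i \<le> j" "Suc (Suc j) < length xs"
  shows "face circ j (face circ i (frag_of xs)) = face circ i (face circ (Suc j) (frag_of xs))"
  by (simp add: face_def frag_extend_diff delete_nth_face_identities[of circ, OF comm assms(2,3)]
      algebra_simps)

lemma face_face:
  assumes comm: "\<And>x a b. circ (circ x a) b = circ (circ x b) a"
    and "c \<in> chains n" "i \<le> j" "Suc (Suc j) < n"
  shows "face circ j (face circ i c) = face circ i (face circ (Suc j) c)"
  using \<open>c \<in> chains n\<close> unfolding chains_def mem_Collect_eq
proof (induction c rule: frag_induction)
  case zero
  then show ?case by (simp add: face_def)
next
  case (one xs)
  then have "Suc (Suc j) < length xs"
    using assms(4) by simp
  then show ?case
    by (rule face_face_frag_of[of circ, OF comm \<open>i \<le> j\<close>])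
next
  case (diff a b)
  then show ?case by (simp add: face_diff)
qed

lemma length_delete_nth: "k < length xs \<Longrightarrow> length (delete_nth k xs) = length xs - 1"
  by (simp add: delete_nth_def)

lemma length_delete_nth_act:
  "Suc k < length xs \<Longrightarrow> length (delete_nth_act circ k xs) = length xs - 1"
  by (simp add: delete_nth_act_def)

lemma face_in_chains:
  assumes "c \<in> chains (Suc n)" "k < n"
  shows "face circ k c \<in> chains n"
proof -
  have "Poly_Mapping.keys (face circ k c)
      \<subseteq> (\<Union>xs \<in> Poly_Mapping.keys c.
           Poly_Mapping.keys (frag_of (delete_nth k xs) - frag_of (delete_nth_act circ k xs)))"
    unfolding face_def by (rule keys_frag_extend)
  also have "\<dots> \<subseteq> {ys. length ys = n}"
  proof (rule UN_least)
    fix xs assume "xs \<in> Poly_Mapping.keys c"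
    with assms(1) have "length xs = Suc n"
      unfolding chains_def by blast
    have "Poly_Mapping.keys (frag_of (delete_nth k xs) - frag_of (delete_nth_act circ k xs))
        \<subseteq> Poly_Mapping.keys (frag_of (delete_nth k xs))
          \<union> Poly_Mapping.keys (frag_of (delete_nth_act circ k xs))"
      by (rule keys_diff)
    also have "\<dots> \<subseteq> {ys. length ys = n}"
      using \<open>length xs = Suc n\<close> length_delete_nth[of k xs] length_delete_nth_act[of k xs circ]
        \<open>k < n\<close>
      by simp
    finally show "Poly_Mapping.keys (frag_of (delete_nth k xs) - frag_of (delete_nth_act circ k xs))
        \<subseteq> {ys. length ys = n}" .
  qed
  finally show ?thesis
    unfolding chains_def by simp
qed

lemma vfb_bd_gen_eq_sum_faces:
  "vfb_bd_gen circ xs = (\<Sum>k<length xs - 1. frag_cmul ((-1) ^ Suc k) (face circ k (frag_of xs)))"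
  unfolding vfb_bd_gen_def face_def delete_nth_def delete_nth_act_def
  by (simp add: sum.atLeast1_atMost_eq)

lemma frag_cmul_diff_distrib2: "frag_cmul c (a - b) = frag_cmul c a - frag_cmul c b"
  by (rule poly_mapping_eqI) (simp add: lookup_minus algebra_simps)

lemma frag_cmul_minus_one_power: "frag_cmul ((-1) ^ p) x = (if even p then x else - x)"
  by simp

lemma vfb_bd_eq_sum_faces:
  assumes "c \<in> chains n"
  shows "vfb_bd circ c = (\<Sum>k<n - 1. frag_cmul ((-1) ^ Suc k) (face circ k c))"
  using assms unfolding chains_def mem_Collect_eq
proof (induction c rule: frag_induction)
  case zero
  then show ?case by (simp add: vfb_bd_def face_def)
next
  case (one xs)
  then show ?case by (simp add: vfb_bd_def vfb_bd_gen_eq_sum_faces)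
next
  case (diff a b)
  then show ?case
    by (simp add: vfb_bd_def frag_extend_diff face_diff frag_cmul_diff_distrib2 sum_subtractf)
qed

lemma alternating_double_sum_cancel:
  fixes F :: "nat \<Rightarrow> nat \<Rightarrow> 'b::ab_group_add"
  assumes "\<And>i j. i \<le> j \<Longrightarrow> j < m \<Longrightarrow> F i j = F (Suc j) i"
  shows "(\<Sum>i<Suc m. \<Sum>j<m. if even (i + j) then F i j else - F i j) = 0"
  using assms
proof (induction m)
  case 0
  then show ?case by simp
next
  case (Suc m)
  let ?t = "\<lambda>i j. if even (i + j) then F i j else - F i j"
  have "(\<Sum>i<Suc (Suc m). \<Sum>j<Suc m. ?t i j)
      = (\<Sum>i<Suc (Suc m). \<Sum>j<m. ?t i j) + (\<Sum>i<Suc (Suc m). ?t i m)"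
    by (simp add: sum.distrib)
  also have "(\<Sum>i<Suc (Suc m). \<Sum>j<m. ?t i j) = (\<Sum>j<m. ?t (Suc m) j)"
    using sum.lessThan_Suc[of "\<lambda>i. \<Sum>j<m. ?t i j" "Suc m"] Suc by simp
  also have "(\<Sum>i<Suc (Suc m). ?t i m) = (\<Sum>i<m. ?t i m) + (?t m m + ?t (Suc m) m)"
    by simp
  also have "?t m m + ?t (Suc m) m = 0"
    using Suc.prems[of m m] by simp
  also have "(\<Sum>i<m. ?t i m) = (\<Sum>i<m. - ?t (Suc m) i)"
    using Suc.prems by (intro sum.cong) auto
  finally show ?case by (simp add: sum_negf)
qed

theorem lemma5p3:
  fixes star circ :: "'a \<Rightarrow> 'a \<Rightarrow> 'a"
  assumes "virtual_flat_biquandle star circ"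
    and "c \<in> chains n"
  shows "vfb_bd circ (vfb_bd circ c) = 0"
proof (cases "n < 2")
  case True
  then show ?thesis
    using vfb_bd_eq_sum_faces[OF assms(2)] by (simp add: vfb_bd_def)
next
  case False
  then obtain m where n: "n = Suc (Suc m)"
    by (metis add_2_eq_Suc le_Suc_ex not_less)
  have comm: "\<And>x a b. circ (circ x a) b = circ (circ x b) a"
    using assms(1) unfolding virtual_flat_biquandle_def by blast
  have face_chain: "face circ i c \<in> chains (Suc m)" if "i < Suc m" for i
    using face_in_chains assms(2) that unfolding n by blast
  let ?F = "\<lambda>i j. face circ j (face circ i c)"
  have "vfb_bd circ (vfb_bd circ c)
      = vfb_bd circ (\<Sum>i<Suc m. frag_cmul ((-1) ^ Suc i) (face circ i c))"
    using vfb_bd_eq_sum_faces[OF assms(2)] by (simp add: n)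
  also have "\<dots> = (\<Sum>i<Suc m. frag_cmul ((-1) ^ Suc i) (vfb_bd circ (face circ i c)))"
    by (simp add: vfb_bd_def frag_extend_sum frag_extend_cmul o_def del: sum.lessThan_Suc)
  also have "\<dots> = (\<Sum>i<Suc m. frag_cmul ((-1) ^ Suc i)
      (\<Sum>j<m. frag_cmul ((-1) ^ Suc j) (?F i j)))"
    using vfb_bd_eq_sum_faces[OF face_chain] by simp
  also have "\<dots> = (\<Sum>i<Suc m. \<Sum>j<m. frag_cmul ((-1) ^ (i + j)) (?F i j))"
    by (simp add: frag_cmul_sum power_add)
  also have "\<dots> = 0"
    using alternating_double_sum_cancel[of m ?F] face_face[of circ, OF comm assms(2)]
    by (simp add: n frag_cmul_minus_one_power)
  finally show ?thesis .
qed

end
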